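(* In the IM-OCP setting described in the context, with $r_1\in[0,B]$ and any non-increasing sequence of positive step sizes $(\eta_t)_{t\ge1}$, for every $T\ge1$ the expected miscoverage error satisfies $$\overline{\mathrm{MisCov}}(T):=\left|\mathbb{E}\left[\frac{1}{T}\sum_{t=1}^T E_t\right]-\alpha\right|\le\frac{1}{T\eta_T}\left(LB+\frac{L\eta_1}{\mu\,p_{\min}}\right),$$ where $p_{\min}=\min_{t\in\{1,\dots,T\}}p_t$ and the expectation is over the feedback indicators $(\mathrm{obs}_t)$.
   Context: Fix $\alpha\in(0,1)$ and $B>0$. Let $(r_t^* )_{t\ge1}$ be an arbitrary deterministic sequence of scores with $r_t^*\in[0,B]$ (the score $r_t^*=s(X_t,Y_t)$ of the true label; the prediction set at time $t$ is $\{y: s(X_t,y)\le r_t\}$). Given thresholds $r_t$, the miscoverage indicator is $E_t=\mathbb{1}\{r_t^*>r_t\}$. The quantile loss is $\ell_{1-\alpha}(r,r^* )=(\alpha-\mathbb{1}\{r<r^*\})(r-r^* )$. Let $P$ be a probability distribution on $[0,B]$ with bounded density, $\sigma>0$, and $R(r)=\mathbb{E}_{r^*\sim P}[\ell_{1-\alpha}(r,r^* )]+\frac{\sigma}{2}r^2$; $R$ is differentiable and $\nabla R$ is a continuous strictly increasing bijection of $\mathbb{R}$. Let $\mu>0$ be a constant such that $R$ is $\mu$-strongly convex (e.g. $\mu=\sigma$) and $L>0$ a constant such that $\nabla R$ is $L$-Lipschitz. Feedback: $p_t\in(0,1]$ and $(\mathrm{obs}_t)_{t\ge1}$ are independent Bernoulli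 random variables with $\Pr(\mathrm{obs}_t=1)=p_t$. IM-OCP: given $r_1$ and step sizes $\eta_t>0$, for $t\ge2$ the threshold $r_t$ is defined by $$\nabla R(r_t)=\nabla R(r_{t-1})-\eta_{t-1}(\alpha-E_{t-1})\frac{\mathrm{obs}_{t-1}}{p_{t-1}}.$$ *)

theory Defs
  imports "HOL-Analysis.Analysis" "HOL-Probability.Probability"
begin

definition quantile_loss :: "real \<Rightarrow> real \<Rightarrow> real \<Rightarrow> real" where
  "quantile_loss \<alpha> r rs = (\<alpha> - (if r < rs then 1 else 0)) * (r - rs)"

definition quantile_risk :: "real measure \<Rightarrow> real \<Rightarrow> real \<Rightarrow> real \<Rightarrow> real" where
  "quantile_risk P \<alpha> \<sigma> r = (\<integral>rs. quantile_loss \<alpha> r rs \<partial>P) + \<sigma> / 2 * r\<^sup>2"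

definition strongly_convex :: "real \<Rightarrow> (real \<Rightarrow> real) \<Rightarrow> bool" where
  "strongly_convex \<mu> f \<longleftrightarrow>
     (\<forall>x y t. 0 \<le> t \<and> t \<le> 1 \<longrightarrow>
        f ((1 - t) * x + t * y) \<le> (1 - t) * f x + t * f y - \<mu> / 2 * t * (1 - t) * (x - y)\<^sup>2)"

definition miscov :: "real \<Rightarrow> real \<Rightarrow> real" where
  "miscov rs r = (if rs > r then 1 else 0)"

end

theory Submission
  imports Defs
begin

text \<open>
  Write \<open>G\<^sub>t = \<nabla>R(r\<^sub>t)\<close> (the function \<open>g\<close> below is \<open>\<nabla>R\<close>). The threshold \<open>r\<^sub>t\<close> is a
  function of the feedback before time \<open>t\<close>, hence independent of \<open>obs\<^sub>t\<close>, so the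
  importance-weighted step \<open>Y\<^sub>t = (\<alpha> - E\<^sub>t) obs\<^sub>t / p\<^sub>t = (G\<^sub>t - G\<^sub>t\<^sub>+\<^sub>1) / \<eta>\<^sub>t\<close> has expectation
  \<open>\<alpha> - \<bbbE>[E\<^sub>t]\<close>, and the expected miscoverage error is \<open>\<bar>\<bbbE>[\<Sum>\<^sub>t Y\<^sub>t]\<bar> / T\<close>.
  Pathwise, strong convexity makes \<open>\<nabla>R\<close> strictly increasing, so \<open>G\<^sub>t > \<nabla>R(B)\<close> forces
  \<open>E\<^sub>t = 0\<close> and \<open>G\<^sub>t < \<nabla>R(0)\<close> forces \<open>E\<^sub>t = 1\<close>: every \<open>G\<^sub>t\<close> stays in an interval of length
  \<open>\<nabla>R(B) - \<nabla>R(0) + \<eta>\<^sub>1 / p\<^sub>m\<^sub>i\<^sub>n \<le> L B + L \<eta>\<^sub>1 / (\<mu> p\<^sub>m\<^sub>i\<^sub>n)\<close> (as \<open>\<mu> \<le> L\<close>). Summation by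
  parts with non-increasing \<open>\<eta>\<^sub>t\<close> bounds \<open>\<bar>\<Sum>\<^sub>t Y\<^sub>t\<bar>\<close> by that length divided by \<open>\<eta>\<^sub>T\<close>.
\<close>

lemma strongly_convex_first_order:
  fixes f g :: "real \<Rightarrow> real"
  assumes sc: "strongly_convex \<mu> f" and d: "\<And>x. (f has_real_derivative g x) (at x)"
  shows "g x * (y - x) \<le> f y - f x - \<mu> / 2 * (y - x)\<^sup>2"
proof (rule ccontr)
  assume neg: "\<not> ?thesis"
  define l where "l = g x * (y - x) - (f y - f x) + \<mu> / 2 * (y - x)\<^sup>2"
  have l: "0 < l" using neg unfolding l_def by simp
  define \<psi> where
    "\<psi> t = f (x + t * (y - x)) - f x - t * (f y - f x) + \<mu> / 2 * (t * (1 - t)) * (y - x)\<^sup>2" for t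
  have \<psi>_nonpos: "\<psi> h \<le> 0" if "0 \<le> h" "h \<le> 1" for h
  proof -
    have "f ((1 - h) * x + h * y) \<le> (1 - h) * f x + h * f y - \<mu> / 2 * h * (1 - h) * (x - y)\<^sup>2"
      using sc that unfolding strongly_convex_def by auto
    moreover have "(1 - h) * x + h * y = x + h * (y - x)" by (simp add: algebra_simps)
    moreover have "(x - y)\<^sup>2 = (y - x)\<^sup>2" by (rule power2_commute)
    ultimately show ?thesis unfolding \<psi>_def by (simp add: algebra_simps)
  qed
  have "(\<psi> has_real_derivative l) (at 0)"
  proof -
    have c: "((\<lambda>t. f (x + t * (y - x))) has_real_derivative g (x + 0 * (y - x)) * (y - x)) (at 0)"
      by (rule DERIV_chain2[OF d]) (auto intro!: derivative_eq_intros)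
    show ?thesis unfolding \<psi>_def l_def
      by (rule derivative_eq_intros c refl | simp)+
  qed
  then obtain e where e: "e > 0" "\<And>h. h > 0 \<Longrightarrow> h < e \<Longrightarrow> \<psi> 0 < \<psi> (0 + h)"
    using DERIV_pos_inc_right l by blast
  then have "\<psi> 0 < \<psi> (min (e / 2) (1 / 2))" by simp
  moreover have "\<psi> (min (e / 2) (1 / 2)) \<le> 0" using e(1) by (intro \<psi>_nonpos) auto
  moreover have "\<psi> 0 = 0" unfolding \<psi>_def by simp
  ultimately show False by simp
qed

lemma strongly_convex_deriv_strongly_monotone:
  fixes f g :: "real \<Rightarrow> real"
  assumes "strongly_convex \<mu> f" and "\<And>x. (f has_real_derivative g x) (at x)"
  shows "\<mu> * (y - x)\<^sup>2 \<le> (g y - g x) * (y - x)"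
  using strongly_convex_first_order[OF assms, of x y] strongly_convex_first_order[OF assms, of y x]
    power2_commute[of x y] by (simp add: algebra_simps)

lemma strongly_monotone_strict_mono:
  fixes g :: "real \<Rightarrow> real"
  assumes "0 < \<mu>" and "\<And>x y. \<mu> * (y - x)\<^sup>2 \<le> (g y - g x) * (y - x)"
  shows "strict_mono g"
proof
  fix x y :: real
  assume "x < y"
  then have "0 < \<mu> * (y - x)\<^sup>2" using assms(1) by simp
  also have "\<dots> \<le> (g y - g x) * (y - x)" by (rule assms(2))
  finally show "g x < g y" using \<open>x < y\<close> by (simp add: zero_less_mult_iff)
qed

lemma strongly_monotone_lipschitz_le:
  fixes g :: "real \<Rightarrow> real"
  assumes "\<And>x y. \<mu> * (y - x)\<^sup>2 \<le> (g y - g x) * (y - x)" and "L-lipschitz_on UNIV g"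
  shows "\<mu> \<le> L"
proof -
  have "\<mu> \<le> g 1 - g 0" using assms(1)[of 0 1] by simp
  also have "\<dots> \<le> dist (g 1) (g 0)" by (simp add: dist_real_def)
  also have "\<dots> \<le> L * dist (1::real) 0" by (rule lipschitz_onD[OF assms(2)]) auto
  finally show ?thesis by simp
qed

lemma strongly_monotone_lipschitz_gap_le:
  fixes g :: "real \<Rightarrow> real"
  assumes "\<And>x y. \<mu> * (y - x)\<^sup>2 \<le> (g y - g x) * (y - x)" and "0 < \<mu>" and "L-lipschitz_on UNIV g"
    and "0 \<le> B" and "0 \<le> c"
  shows "g B - g 0 + c \<le> L * B + L * c / \<mu>"
proof -
  have "g B - g 0 \<le> L * B"
    using lipschitz_onD[OF assms(3), of B 0] \<open>0 \<le> B\<close> by (simp add: dist_real_def)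
  moreover have "c \<le> L * c / \<mu>"
    using strongly_monotone_lipschitz_le[OF assms(1,3)] assms(2,5)
    by (simp add: field_simps mult_right_mono)
  ultimately show ?thesis by linarith
qed

lemma abs_sum_diff_div_le:
  fixes h \<eta> :: "nat \<Rightarrow> real"
  assumes h: "\<And>t. 1 \<le> t \<Longrightarrow> t \<le> Suc n \<Longrightarrow> \<bar>h t\<bar> \<le> c"
    and \<eta>_pos: "\<And>t. 1 \<le> t \<Longrightarrow> 0 < \<eta> t" and \<eta>_mono: "\<And>t. 1 \<le> t \<Longrightarrow> \<eta> (Suc t) \<le> \<eta> t"
    and n: "1 \<le> n"
  shows "\<bar>\<Sum>t = 1..n. (h t - h (Suc t)) / \<eta> t\<bar> \<le> 2 * c / \<eta> n"
proof -
  define S where "S m = (\<Sum>t = 1..m. (h t - h (Suc t)) / \<eta> t)" for m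
  have abs_h_div: "\<bar>h t / \<eta> m\<bar> \<le> c / \<eta> m" if "1 \<le> t" "t \<le> Suc n" "1 \<le> m" for t m
    using h[OF that(1,2)] \<eta>_pos[OF that(3)] by (simp add: abs_divide divide_right_mono)
  have partial: "\<bar>S m + h (Suc m) / \<eta> m\<bar> \<le> c / \<eta> m" if "1 \<le> m" "m \<le> n" for m
    using that
  proof (induction m rule: dec_induct)
    case base
    have "S 1 + h (Suc 1) / \<eta> 1 = h 1 / \<eta> 1" by (simp add: S_def diff_divide_distrib)
    with abs_h_div[of 1 1] n show ?case by simp
  next
    case (step m)
    have gap: "0 \<le> 1 / \<eta> (Suc m) - 1 / \<eta> m"
      using \<eta>_pos[of "Suc m"] \<eta>_mono[of m] step.hyps by (simp add: frac_le)
    have "S (Suc m) + h (Suc (Suc m)) / \<eta> (Suc m)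
        = (S m + h (Suc m) / \<eta> m) + h (Suc m) * (1 / \<eta> (Suc m) - 1 / \<eta> m)"
      using step.hyps by (simp add: S_def algebra_simps diff_divide_distrib)
    also have "\<bar>\<dots>\<bar> \<le> c / \<eta> m + c * (1 / \<eta> (Suc m) - 1 / \<eta> m)"
    proof -
      have "\<bar>h (Suc m)\<bar> * (1 / \<eta> (Suc m) - 1 / \<eta> m) \<le> c * (1 / \<eta> (Suc m) - 1 / \<eta> m)"
        using h[of "Suc m"] step.hyps step.prems gap by (intro mult_right_mono) auto
      moreover have "\<bar>h (Suc m) * (1 / \<eta> (Suc m) - 1 / \<eta> m)\<bar>
          = \<bar>h (Suc m)\<bar> * (1 / \<eta> (Suc m) - 1 / \<eta> m)"
        using gap by (simp add: abs_mult)
      ultimately show ?thesis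
        using step.IH step.prems
          abs_triangle_ineq[of "S m + h (Suc m) / \<eta> m" "h (Suc m) * (1 / \<eta> (Suc m) - 1 / \<eta> m)"]
        by simp
    qed
    also have "\<dots> = c / \<eta> (Suc m)" by (simp add: algebra_simps)
    finally show ?case .
  qed
  have "\<bar>S n\<bar> \<le> \<bar>S n + h (Suc n) / \<eta> n\<bar> + \<bar>h (Suc n) / \<eta> n\<bar>" by linarith
  also have "\<dots> \<le> 2 * c / \<eta> n" using partial[of n] abs_h_div[of "Suc n" n] n by simp
  finally show ?thesis unfolding S_def .
qed

lemma abs_sum_diff_div_le_interval:
  fixes x \<eta> :: "nat \<Rightarrow> real"
  assumes x: "\<And>t. 1 \<le> t \<Longrightarrow> t \<le> Suc n \<Longrightarrow> a \<le> x t \<and> x t \<le> b"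
    and "\<And>t. 1 \<le> t \<Longrightarrow> 0 < \<eta> t" and "\<And>t. 1 \<le> t \<Longrightarrow> \<eta> (Suc t) \<le> \<eta> t" and "1 \<le> n"
  shows "\<bar>\<Sum>t = 1..n. (x t - x (Suc t)) / \<eta> t\<bar> \<le> (b - a) / \<eta> n"
proof -
  define h where "h t = x t - (a + b) / 2" for t
  have "\<bar>\<Sum>t = 1..n. (x t - x (Suc t)) / \<eta> t\<bar> = \<bar>\<Sum>t = 1..n. (h t - h (Suc t)) / \<eta> t\<bar>"
    by (simp add: h_def)
  also have "\<dots> \<le> 2 * ((b - a) / 2) / \<eta> n"
  proof (rule abs_sum_diff_div_le)
    show "\<bar>h t\<bar> \<le> (b - a) / 2" if "1 \<le> t" "t \<le> Suc n" for t
      using x[OF that] by (auto simp: h_def abs_le_iff field_simps)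
  qed (use assms in auto)
  also have "\<dots> = (b - a) / \<eta> n" by (simp only: mult_2 field_sum_of_halves)
  finally show ?thesis .
qed

lemma step_ratio_le_Min:
  fixes \<eta> p :: "nat \<Rightarrow> real"
  assumes \<eta>_pos: "\<And>t. 1 \<le> t \<Longrightarrow> 0 < \<eta> t" and \<eta>_mono: "\<And>t. 1 \<le> t \<Longrightarrow> \<eta> (Suc t) \<le> \<eta> t"
    and p_pos: "\<And>t. 1 \<le> t \<Longrightarrow> 0 < p t" and t: "t \<in> {1..T}"
  shows "\<eta> t / p t \<le> \<eta> 1 / Min (p ` {1..T})"
proof -
  have "1 \<le> t" using t by simp
  then have "\<eta> t \<le> \<eta> 1"
  proof (induction t rule: dec_induct)
    case (step n)
    then show ?case using \<eta>_mono[of n] by simp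
  qed simp
  then have "\<eta> t / p t \<le> \<eta> 1 / p t" using p_pos[of t] \<open>1 \<le> t\<close> by (simp add: divide_right_mono)
  also have "\<dots> \<le> \<eta> 1 / Min (p ` {1..T})"
  proof (rule divide_left_mono)
    show "Min (p ` {1..T}) \<le> p t" using t by simp
    show "0 < p t * Min (p ` {1..T})" using t p_pos by simp
  qed (use \<eta>_pos[of 1] in simp)
  finally show ?thesis .
qed

lemma imocp_gradient_bounds:
  fixes g :: "real \<Rightarrow> real" and r rstar \<eta> p :: "nat \<Rightarrow> real" and obs :: "nat \<Rightarrow> bool"
  assumes g: "mono g" and \<alpha>: "0 \<le> \<alpha>" "\<alpha> \<le> 1"
    and rstar: "\<And>t. 1 \<le> t \<Longrightarrow> rstar t \<in> {0..B}" and r1: "r 1 \<in> {0..B}"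
    and c: "0 \<le> c" and step_size: "\<And>t. 1 \<le> t \<Longrightarrow> t \<le> T \<Longrightarrow> 0 \<le> \<eta> t / p t \<and> \<eta> t / p t \<le> c"
    and rec: "\<And>t. 1 \<le> t \<Longrightarrow> g (r (Suc t)) =
      g (r t) - \<eta> t * (\<alpha> - miscov (rstar t) (r t)) * (if obs t then 1 else 0) / p t"
    and t: "1 \<le> t" "t \<le> Suc T"
  shows "g 0 - c * \<alpha> \<le> g (r t) \<and> g (r t) \<le> g B + c * (1 - \<alpha>)"
  using t
proof (induction t rule: dec_induct)
  case base
  have "g 0 \<le> g (r 1) \<and> g (r 1) \<le> g B" using r1 by (auto intro: monoD[OF g])
  moreover have "0 \<le> c * \<alpha>" "0 \<le> c * (1 - \<alpha>)" using c \<alpha> by simp_all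
  ultimately show ?case by linarith
next
  case (step t)
  define s where "s = \<eta> t / p t"
  define i where "i = (if obs t then 1 else 0 :: real)"
  have s: "0 \<le> s" "s \<le> c" using step.hyps step.prems step_size[of t] unfolding s_def by auto
  have i: "0 \<le> i" "i \<le> 1" unfolding i_def by auto
  have upd: "g (r (Suc t)) = g (r t) - s * (\<alpha> - miscov (rstar t) (r t)) * i"
    using rec[OF step.hyps(1)] by (simp add: s_def i_def)
  have IH: "g 0 - c * \<alpha> \<le> g (r t)" "g (r t) \<le> g B + c * (1 - \<alpha>)" using step.IH step.prems by auto
  have up: "0 \<le> s * (1 - \<alpha>) * i \<and> s * (1 - \<alpha>) * i \<le> c * (1 - \<alpha>)"
    using s \<alpha> i mult_right_le_one_le[of "s * (1 - \<alpha>)" i] mult_right_mono[of s c "1 - \<alpha>"] by simp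
  have down: "0 \<le> s * \<alpha> * i \<and> s * \<alpha> * i \<le> c * \<alpha>"
    using s \<alpha> i mult_right_le_one_le[of "s * \<alpha>" i] mult_right_mono[of s c \<alpha>] by simp
  have rs: "0 \<le> rstar t" "rstar t \<le> B" using rstar[OF step.hyps(1)] by auto
  show ?case
  proof (cases "rstar t > r t")
    case True
    then have "g (r t) \<le> g B" using rs by (intro monoD[OF g]) simp
    moreover have "g (r (Suc t)) = g (r t) + s * (1 - \<alpha>) * i"
      using upd True by (simp add: miscov_def algebra_simps)
    ultimately show ?thesis using IH up by linarith
  next
    case False
    then have "g 0 \<le> g (r t)" using rs by (intro monoD[OF g]) simp
    moreover have "g (r (Suc t)) = g (r t) - s * \<alpha> * i"
      using upd False by (simp add: miscov_def)
    ultimately show ?thesis using IH down by linarith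
  qed
qed

lemma imocp_weighted_sum_bound:
  fixes g :: "real \<Rightarrow> real" and r rstar \<eta> p :: "nat \<Rightarrow> real" and obs :: "nat \<Rightarrow> bool"
  assumes g: "mono g" and \<alpha>: "0 \<le> \<alpha>" "\<alpha> \<le> 1"
    and rstar: "\<And>t. 1 \<le> t \<Longrightarrow> rstar t \<in> {0..B}" and r1: "r 1 \<in> {0..B}"
    and \<eta>_pos: "\<And>t. 1 \<le> t \<Longrightarrow> 0 < \<eta> t" and \<eta>_mono: "\<And>t. 1 \<le> t \<Longrightarrow> \<eta> (Suc t) \<le> \<eta> t"
    and p_pos: "\<And>t. 1 \<le> t \<Longrightarrow> 0 < p t" and c: "\<And>t. 1 \<le> t \<Longrightarrow> t \<le> T \<Longrightarrow> \<eta> t / p t \<le> c"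
    and rec: "\<And>t. 1 \<le> t \<Longrightarrow> g (r (Suc t)) =
      g (r t) - \<eta> t * (\<alpha> - miscov (rstar t) (r t)) * (if obs t then 1 else 0) / p t"
    and T: "1 \<le> T"
  shows "\<bar>\<Sum>t = 1..T. (\<alpha> - miscov (rstar t) (r t)) * (if obs t then 1 else 0) / p t\<bar>
    \<le> (g B - g 0 + c) / \<eta> T"
proof -
  have step_nonneg: "0 \<le> \<eta> t / p t" if "1 \<le> t" for t
    using \<eta>_pos[OF that] p_pos[OF that] by simp
  then have "0 \<le> c" using c[of 1] T by fastforce
  have step_size: "0 \<le> \<eta> t / p t \<and> \<eta> t / p t \<le> c" if "1 \<le> t" "t \<le> T" for t
    using step_nonneg[OF that(1)] c[OF that] by simp
  have bounds: "g 0 - c * \<alpha> \<le> g (r t) \<and> g (r t) \<le> g B + c * (1 - \<alpha>)"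
    if "1 \<le> t" "t \<le> Suc T" for t
    by (rule imocp_gradient_bounds[OF g \<alpha> rstar r1 \<open>0 \<le> c\<close> step_size rec that])
  have "(\<alpha> - miscov (rstar t) (r t)) * (if obs t then 1 else 0) / p t
      = (g (r t) - g (r (Suc t))) / \<eta> t"
    if "1 \<le> t" for t
    using \<eta>_pos[OF that] unfolding rec[OF that] by simp
  then have "(\<Sum>t = 1..T. (\<alpha> - miscov (rstar t) (r t)) * (if obs t then 1 else 0) / p t)
      = (\<Sum>t = 1..T. (g (r t) - g (r (Suc t))) / \<eta> t)" by (intro sum.cong) auto
  also have "\<bar>\<dots>\<bar> \<le> (g B + c * (1 - \<alpha>) - (g 0 - c * \<alpha>)) / \<eta> T"
    by (rule abs_sum_diff_div_le_interval) (use bounds \<eta>_pos \<eta>_mono T in auto)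
  also have "g B + c * (1 - \<alpha>) - (g 0 - c * \<alpha>) = g B - g 0 + c" by (simp add: algebra_simps)
  finally show ?thesis .
qed

text \<open>The IM-OCP threshold as a function of the feedback sequence; index 0 is a dummy
  equal to \<open>r\<^sub>1\<close>, so that time is counted from 1 as in the paper.\<close>

primrec imocp_threshold ::
  "(real \<Rightarrow> real) \<Rightarrow> (nat \<Rightarrow> real) \<Rightarrow> (nat \<Rightarrow> real) \<Rightarrow> (nat \<Rightarrow> real) \<Rightarrow> real \<Rightarrow> real \<Rightarrow>
    nat \<Rightarrow> (nat \<Rightarrow> bool) \<Rightarrow> real"
where
  "imocp_threshold g rstar \<eta> p \<alpha> r1 0 b = r1"
| "imocp_threshold g rstar \<eta> p \<alpha> r1 (Suc t) b =
    (if t = 0 then r1 else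
      let r = imocp_threshold g rstar \<eta> p \<alpha> r1 t b
      in inv g (g r - \<eta> t * (\<alpha> - miscov (rstar t) r) * (if b t then 1 else 0) / p t))"

lemma imocp_threshold_cong:
  assumes "\<And>i. 1 \<le> i \<Longrightarrow> i < t \<Longrightarrow> b i = b' i"
  shows "imocp_threshold g rstar \<eta> p \<alpha> r1 t b = imocp_threshold g rstar \<eta> p \<alpha> r1 t b'"
  using assms by (induction t) (auto simp: Let_def)

lemma imocp_threshold_eq:
  fixes g :: "real \<Rightarrow> real" and r :: "nat \<Rightarrow> real"
  assumes "inj g" and "r 1 = r1"
    and rec: "\<And>t. 1 \<le> t \<Longrightarrow> g (r (Suc t)) =
      g (r t) - \<eta> t * (\<alpha> - miscov (rstar t) (r t)) * (if obs t then 1 else 0) / p t"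
    and "1 \<le> t"
  shows "r t = imocp_threshold g rstar \<eta> p \<alpha> r1 t (restrict obs {1..<t})"
proof -
  have "r t = imocp_threshold g rstar \<eta> p \<alpha> r1 t obs"
    using \<open>1 \<le> t\<close>
  proof (induction t rule: dec_induct)
    case base
    then show ?case using \<open>r 1 = r1\<close> by simp
  next
    case (step t)
    have "r (Suc t) = inv g (g (r (Suc t)))" using \<open>inj g\<close> by simp
    then show ?case using rec[OF step.hyps(1)] step by (simp add: Let_def)
  qed
  also have "\<dots> = imocp_threshold g rstar \<eta> p \<alpha> r1 t (restrict obs {1..<t})"
    by (rule imocp_threshold_cong) simp
  finally show ?thesis .
qed

lemma (in prob_space) expectation_importance_weighted:
  fixes obs :: "nat \<Rightarrow> 'a \<Rightarrow> bool" and f :: "(nat \<Rightarrow> bool) \<Rightarrow> real"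
  assumes obs: "indep_vars (\<lambda>_. count_space UNIV) obs I"
    and J: "finite J" "J \<subseteq> I" and t: "t \<in> I" "t \<notin> J"
    and f: "\<And>b. \<bar>f b\<bar> \<le> C" and q: "prob {\<omega> \<in> space M. obs t \<omega>} = q" "q \<noteq> 0"
  shows "integrable M (\<lambda>\<omega>. f (restrict (\<lambda>i. obs i \<omega>) J))"
    and "integrable M (\<lambda>\<omega>. f (restrict (\<lambda>i. obs i \<omega>) J) * (if obs t \<omega> then 1 else 0) / q)"
    and "expectation (\<lambda>\<omega>. f (restrict (\<lambda>i. obs i \<omega>) J) * (if obs t \<omega> then 1 else 0) / q)
      = expectation (\<lambda>\<omega>. f (restrict (\<lambda>i. obs i \<omega>) J))"
proof -
  define Z where "Z = (\<lambda>\<omega>. f (restrict (\<lambda>i. obs i \<omega>) J))"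
  define V where "V = (\<lambda>\<omega>. if obs t \<omega> then 1 else 0 :: real)"
  have Z_comp: "f \<circ> (\<lambda>\<omega>. restrict (\<lambda>i. obs i \<omega>) J) = Z"
    and V_comp: "(\<lambda>b. if b t then 1 else 0 :: real) \<circ> (\<lambda>\<omega>. restrict (\<lambda>i. obs i \<omega>) {t}) = V"
    by (simp_all add: fun_eq_iff Z_def V_def)
  have any_measurable: "h \<in> measurable (PiM K (\<lambda>_. count_space UNIV)) N"
    if "finite K" "space N = UNIV"
    for K and h :: "(nat \<Rightarrow> bool) \<Rightarrow> 'b" and N
    using that by (simp add: count_space_PiM_finite)
  have "indep_var (PiM J (\<lambda>_. count_space UNIV)) (\<lambda>\<omega>. restrict (\<lambda>i. obs i \<omega>) J)
      (PiM {t} (\<lambda>_. count_space UNIV)) (\<lambda>\<omega>. restrict (\<lambda>i. obs i \<omega>) {t})"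
    using J t by (intro indep_var_restrict[OF obs]) auto
  then have indep: "indep_var borel Z borel V"
    unfolding Z_comp[symmetric] V_comp[symmetric]
    by (rule indep_var_compose) (rule any_measurable; use J in simp)+
  have obs_meas: "obs i \<in> measurable M (count_space UNIV)" if "i \<in> I" for i
    using obs that unfolding indep_vars_def by auto
  have "(\<lambda>\<omega>. restrict (\<lambda>i. obs i \<omega>) J) \<in> measurable M (PiM J (\<lambda>_. count_space UNIV))"
    using J obs_meas by (intro measurable_restrict) auto
  then have "Z \<in> borel_measurable M"
    unfolding Z_comp[symmetric] by (rule measurable_comp) (rule any_measurable; use J in simp)
  then have Z_int: "integrable M Z"
    using f by (intro integrable_const_bound[where B=C]) (auto simp: Z_def)
  then show "integrable M (\<lambda>\<omega>. f (restrict (\<lambda>i. obs i \<omega>) J))" by (simp add: Z_def)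
  have "(\<lambda>b. if b then 1 else 0 :: real) \<in> measurable (count_space UNIV) borel" by simp
  from measurable_comp[OF obs_meas[OF t(1)] this]
  have "V \<in> borel_measurable M" by (simp add: comp_def V_def)
  then have V_int: "integrable M V" by (intro integrable_const_bound[where B=1]) (auto simp: V_def)
  have "{\<omega> \<in> space M. obs t \<omega>} \<in> events"
    using measurable_sets[OF obs_meas[OF t(1)], of "{True}"]
    by (simp add: vimage_def Int_def conj_commute)
  moreover have "expectation V = expectation (indicator {\<omega> \<in> space M. obs t \<omega>})"
    by (rule Bochner_Integration.integral_cong) (simp_all add: V_def indicator_def)
  ultimately have EV: "expectation V = q" using q by simp
  show "integrable M (\<lambda>\<omega>. f (restrict (\<lambda>i. obs i \<omega>) J) * (if obs t \<omega> then 1 else 0) / q)"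
    using indep_var_integrable[OF indep Z_int V_int] by (simp add: Z_def V_def)
  have "expectation (\<lambda>\<omega>. Z \<omega> * V \<omega> / q) = expectation Z * expectation V / q"
    using indep_var_lebesgue_integral[OF indep Z_int V_int] by simp
  then show "expectation (\<lambda>\<omega>. f (restrict (\<lambda>i. obs i \<omega>) J) * (if obs t \<omega> then 1 else 0) / q)
      = expectation (\<lambda>\<omega>. f (restrict (\<lambda>i. obs i \<omega>) J))"
    using EV q by (simp add: Z_def V_def)
qed

lemma (in prob_space) miscov_step_unbiased:
  fixes obs :: "nat \<Rightarrow> 'a \<Rightarrow> bool" and R :: "'a \<Rightarrow> real"
  assumes obs: "indep_vars (\<lambda>_. count_space UNIV) obs {1..}"
    and q: "prob {\<omega> \<in> space M. obs t \<omega>} = q" "q \<noteq> 0"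
    and R: "\<And>\<omega>. \<omega> \<in> space M \<Longrightarrow> R \<omega> = F (restrict (\<lambda>i. obs i \<omega>) {1..<t})" and t: "1 \<le> t"
  shows "integrable M (\<lambda>\<omega>. miscov s (R \<omega>))"
    and "integrable M (\<lambda>\<omega>. (\<alpha> - miscov s (R \<omega>)) * (if obs t \<omega> then 1 else 0) / q)"
    and "expectation (\<lambda>\<omega>. (\<alpha> - miscov s (R \<omega>)) * (if obs t \<omega> then 1 else 0) / q)
      = \<alpha> - expectation (\<lambda>\<omega>. miscov s (R \<omega>))"
proof -
  define f where "f b = \<alpha> - miscov s (F b)" for b
  have f_bound: "\<bar>f b\<bar> \<le> \<bar>\<alpha>\<bar> + 1" for b
    using abs_triangle_ineq4[of \<alpha> 1] by (simp add: f_def miscov_def)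
  have past: "finite {1..<t}" "{1..<t} \<subseteq> {1..}" "t \<in> {1..}" "t \<notin> {1..<t}" using t by auto
  note weighted = expectation_importance_weighted[OF obs past f_bound q]
  have R_f: "\<alpha> - miscov s (R \<omega>) = f (restrict (\<lambda>i. obs i \<omega>) {1..<t})" if "\<omega> \<in> space M" for \<omega>
    by (simp add: f_def R[OF that])
  have int_f: "integrable M (\<lambda>\<omega>. \<alpha> - miscov s (R \<omega>))"
    using weighted(1) by (subst Bochner_Integration.integrable_cong[OF refl R_f]) auto
  then show int_miscov: "integrable M (\<lambda>\<omega>. miscov s (R \<omega>))"
    using Bochner_Integration.integrable_diff[OF integrable_const[of \<alpha>] int_f] by simp
  show "integrable M (\<lambda>\<omega>. (\<alpha> - miscov s (R \<omega>)) * (if obs t \<omega> then 1 else 0) / q)"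
    using weighted(2) by (subst Bochner_Integration.integrable_cong[OF refl]) (auto simp: R_f)
  have "expectation (\<lambda>\<omega>. (\<alpha> - miscov s (R \<omega>)) * (if obs t \<omega> then 1 else 0) / q)
      = expectation (\<lambda>\<omega>. f (restrict (\<lambda>i. obs i \<omega>) {1..<t}) * (if obs t \<omega> then 1 else 0) / q)"
    by (rule Bochner_Integration.integral_cong) (simp_all add: R_f)
  also have "\<dots> = expectation (\<lambda>\<omega>. f (restrict (\<lambda>i. obs i \<omega>) {1..<t}))" by (rule weighted(3))
  also have "\<dots> = expectation (\<lambda>\<omega>. \<alpha> - miscov s (R \<omega>))"
    by (rule Bochner_Integration.integral_cong) (simp_all add: R_f)
  also have "\<dots> = \<alpha> - expectation (\<lambda>\<omega>. miscov s (R \<omega>))"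
    using int_miscov by (simp add: prob_space)
  finally show "expectation (\<lambda>\<omega>. (\<alpha> - miscov s (R \<omega>)) * (if obs t \<omega> then 1 else 0) / q)
      = \<alpha> - expectation (\<lambda>\<omega>. miscov s (R \<omega>))" .
qed

lemma (in prob_space) abs_expectation_average_deviation_le:
  fixes X Y :: "'i \<Rightarrow> 'a \<Rightarrow> real"
  assumes A: "finite A" "A \<noteq> {}"
    and X_int: "\<And>i. i \<in> A \<Longrightarrow> integrable M (X i)" and Y_int: "\<And>i. i \<in> A \<Longrightarrow> integrable M (Y i)"
    and EY: "\<And>i. i \<in> A \<Longrightarrow> expectation (Y i) = \<alpha> - expectation (X i)"
    and K: "\<And>\<omega>. \<omega> \<in> space M \<Longrightarrow> \<bar>\<Sum>i\<in>A. Y i \<omega>\<bar> \<le> K"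
  shows "\<bar>expectation (\<lambda>\<omega>. 1 / real (card A) * (\<Sum>i\<in>A. X i \<omega>)) - \<alpha>\<bar> \<le> K / real (card A)"
proof -
  have "expectation (\<lambda>\<omega>. \<Sum>i\<in>A. Y i \<omega>) = (\<Sum>i\<in>A. \<alpha> - expectation (X i))"
    using Y_int EY by (simp add: integral_sum)
  also have "\<dots> = real (card A) * \<alpha> - expectation (\<lambda>\<omega>. \<Sum>i\<in>A. X i \<omega>)"
    using X_int by (simp add: integral_sum sum_subtractf)
  finally have "expectation (\<lambda>\<omega>. \<Sum>i\<in>A. X i \<omega>)
      = real (card A) * \<alpha> - expectation (\<lambda>\<omega>. \<Sum>i\<in>A. Y i \<omega>)" by simp
  moreover have "1 / n * (n * \<alpha> - y) - \<alpha> = - y / n" if "0 < n" for n y :: real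
    using that by (simp add: right_diff_distrib)
  ultimately have "expectation (\<lambda>\<omega>. 1 / real (card A) * (\<Sum>i\<in>A. X i \<omega>)) - \<alpha>
      = - expectation (\<lambda>\<omega>. \<Sum>i\<in>A. Y i \<omega>) / real (card A)"
    using A by (simp add: card_gt_0_iff)
  moreover have "\<bar>expectation (\<lambda>\<omega>. \<Sum>i\<in>A. Y i \<omega>)\<bar> \<le> K"
  proof -
    have "integrable M (\<lambda>\<omega>. \<Sum>i\<in>A. Y i \<omega>)" using Y_int by simp
    moreover have "- K \<le> (\<Sum>i\<in>A. Y i \<omega>)" "(\<Sum>i\<in>A. Y i \<omega>) \<le> K" if "\<omega> \<in> space M" for \<omega>
      using K[OF that] by auto
    ultimately show ?thesis
      by (intro abs_leI) (auto intro!: integral_le_const integral_ge_const simp: minus_le_iff)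
  qed
  ultimately show ?thesis using A by (simp add: divide_right_mono)
qed

theorem theorem1:
  fixes \<alpha> B \<sigma> \<mu> L r1 :: real
    and rstar :: "nat \<Rightarrow> real"
    and P :: "real measure"
    and g :: "real \<Rightarrow> real"
    and M :: "'a measure"
    and obs :: "nat \<Rightarrow> 'a \<Rightarrow> bool"
    and p :: "nat \<Rightarrow> real"
    and \<eta> :: "nat \<Rightarrow> real"
    and r :: "nat \<Rightarrow> 'a \<Rightarrow> real"
    and T :: nat
  assumes alpha: "0 < \<alpha>" "\<alpha> < 1"
    and B: "0 < B"
    and rstar: "\<And>t. t \<ge> 1 \<Longrightarrow> rstar t \<in> {0..B}"
    and P_prob: "prob_space P" and P_sets: "sets P = sets borel"
    and P_supp: "measure P {0..B} = 1"
    and P_density: "\<exists>f K. f \<in> borel_measurable borel \<and> (\<forall>x. 0 \<le> f x \<and> f x \<le> K)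
                        \<and> P = density lborel (\<lambda>x. ennreal (f x))"
    and sigma: "0 < \<sigma>"
    and g_deriv: "\<And>x. (quantile_risk P \<alpha> \<sigma> has_real_derivative g x) (at x)"
    and mu: "0 < \<mu>" "strongly_convex \<mu> (quantile_risk P \<alpha> \<sigma>)"
    and L: "0 < L" "L-lipschitz_on UNIV g"
    and M_prob: "prob_space M"
    and obs_indep: "prob_space.indep_vars M (\<lambda>_. count_space UNIV) obs {1..}"
    and p: "\<And>t. t \<ge> 1 \<Longrightarrow> 0 < p t \<and> p t \<le> 1"
    and obs_prob: "\<And>t. t \<ge> 1 \<Longrightarrow> measure M {\<omega> \<in> space M. obs t \<omega>} = p t"
    and eta_pos: "\<And>t. t \<ge> 1 \<Longrightarrow> 0 < \<eta> t"
    and eta_mono: "\<And>t. t \<ge> 1 \<Longrightarrow> \<eta> (Suc t) \<le> \<eta> t"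
    and r1: "r1 \<in> {0..B}"
    and r_init: "\<And>\<omega>. \<omega> \<in> space M \<Longrightarrow> r 1 \<omega> = r1"
    and r_rec: "\<And>t \<omega>. t \<ge> 1 \<Longrightarrow> \<omega> \<in> space M \<Longrightarrow>
        g (r (Suc t) \<omega>) = g (r t \<omega>)
          - \<eta> t * (\<alpha> - miscov (rstar t) (r t \<omega>)) * (if obs t \<omega> then 1 else 0) / p t"
    and T: "T \<ge> 1"
  shows "\<bar>prob_space.expectation M
            (\<lambda>\<omega>. (1 / real T) * (\<Sum>t = 1..T. miscov (rstar t) (r t \<omega>))) - \<alpha>\<bar>
         \<le> 1 / (real T * \<eta> T) * (L * B + L * \<eta> 1 / (\<mu> * Min (p ` {1..T})))"
proof -
  interpret M: prob_space M by (rule M_prob)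
  have g_sm: "\<mu> * (y - x)\<^sup>2 \<le> (g y - g x) * (y - x)" for x y
    by (rule strongly_convex_deriv_strongly_monotone[OF mu(2) g_deriv])
  have g_strict: "strict_mono g" by (rule strongly_monotone_strict_mono[OF mu(1) g_sm])
  define pm where "pm = Min (p ` {1..T})"
  have p_pos: "\<And>t. 1 \<le> t \<Longrightarrow> 0 < p t" using p by blast
  have pm: "0 < pm" using T p_pos by (simp add: pm_def)
  have step: "\<eta> t / p t \<le> \<eta> 1 / pm" if "1 \<le> t" "t \<le> T" for t
    unfolding pm_def using that
    by (intro step_ratio_le_Min[where \<eta>=\<eta> and p=p, OF eta_pos eta_mono p_pos]) auto
  have r_past: "r t \<omega> = imocp_threshold g rstar \<eta> p \<alpha> r1 t (restrict (\<lambda>i. obs i \<omega>) {1..<t})"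
    if "1 \<le> t" "\<omega> \<in> space M" for t \<omega>
    by (rule imocp_threshold_eq[where r="\<lambda>t. r t \<omega>" and obs="\<lambda>t. obs t \<omega>",
          OF strict_mono_imp_inj_on[OF g_strict] r_init[OF that(2)] r_rec[OF _ that(2)] that(1)])
  define Y where "Y t \<omega> = (\<alpha> - miscov (rstar t) (r t \<omega>)) * (if obs t \<omega> then 1 else 0) / p t" for t \<omega>
  have sum_Y: "\<bar>\<Sum>t = 1..T. Y t \<omega>\<bar> \<le> (g B - g 0 + \<eta> 1 / pm) / \<eta> T" if "\<omega> \<in> space M" for \<omega>
    unfolding Y_def
    using imocp_weighted_sum_bound[where r="\<lambda>t. r t \<omega>" and obs="\<lambda>t. obs t \<omega>",
        OF strict_mono_mono[OF g_strict] _ _ rstar _ eta_pos eta_mono p_pos step r_rec[OF _ that] T]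
      alpha r1 r_init[OF that] by simp
  have unbiased: "integrable M (\<lambda>\<omega>. miscov (rstar t) (r t \<omega>)) \<and> integrable M (Y t)
      \<and> M.expectation (Y t) = \<alpha> - M.expectation (\<lambda>\<omega>. miscov (rstar t) (r t \<omega>))"
    if "t \<in> {1..T}" for t
  proof -
    have t: "1 \<le> t" and "p t \<noteq> 0" using that p_pos[of t] by auto
    from M.miscov_step_unbiased[where R="r t" and F="imocp_threshold g rstar \<eta> p \<alpha> r1 t"
        and s="rstar t", OF obs_indep obs_prob[OF t] this(2) r_past[OF t] t]
    show ?thesis by (simp add: Y_def[abs_def])
  qed
  have "\<bar>M.expectation (\<lambda>\<omega>. 1 / real (card {1..T}) * (\<Sum>t = 1..T. miscov (rstar t) (r t \<omega>))) - \<alpha>\<bar>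
      \<le> (g B - g 0 + \<eta> 1 / pm) / \<eta> T / real (card {1..T})"
    by (rule M.abs_expectation_average_deviation_le[where Y=Y]) (use T unbiased sum_Y in auto)
  also have "\<dots> \<le> (L * B + L * (\<eta> 1 / pm) / \<mu>) / \<eta> T / real (card {1..T})"
    using strongly_monotone_lipschitz_gap_le[OF g_sm mu(1) L(2), of B "\<eta> 1 / pm"]
      B pm eta_pos[of 1] eta_pos[of T] T by (intro divide_right_mono) auto
  finally show ?thesis unfolding pm_def by (simp add: mult.commute)
qed

end
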